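(* Let $g\in C^1$ be a Riemannian metric on $\mathbb{R}^D$ written as $g_x(u,u)=u^{\top}H(x)u$, with $\|H(x)-H(y)\|_{\mathcal{B}}\le L_H\|x-y\|_2$ for all $x,y$. Let $N\ge1$, $\gamma^{\mathrm{p}}\in\mathcal{C}^N_{\mathrm{p}}$, and $K_3^2:=\frac1N\sum_{n=0}^{N-1}\|\beta^{\mathrm{p}}(t_n)\|_2^2$. Then $$\left|\mathcal{E}^g(\gamma^{\mathrm{pl}})-\mathcal{E}^g_{\mathrm{l},N}(\gamma^{\mathrm{p}})\right|\le\frac{L_HK_3^3}{2N^{1/2}}.$$
   Context: $t_n=n/N$, $h=1/N$; $\mathcal{C}^N_{\mathrm{p}}$ is the set of maps $\gamma^{\mathrm{p}}:\{t_0,\dots,t_N\}\to\mathbb{R}^D$; $\beta^{\mathrm{p}}(t_n)=(\gamma^{\mathrm{p}}(t_{n+1})-\gamma^{\mathrm{p}}(t_n))/h$; $\gamma^{\mathrm{pl}}(t_n+s)=(1-Ns)\gamma^{\mathrm{p}}(t_n)+Ns\gamma^{\mathrm{p}}(t_{n+1})$ for $0\le s\le h$; $\mathcal{E}^g(\gamma)=\int_0^1 g_{\gamma(t)}(\dot\gamma,\dot\gamma)dt$; $\mathcal{E}^g_{\mathrm{l},N}(\gamma^{\mathrm{p}})=\frac1N\sum_{n=0}^{N-1}g_{\gamma^{\mathrm{p}}(t_n)}(\beta^{\mathrm{p}}(t_n),\beta^{\mathrm{p}}(t_n))$. $\|\cdot\|_{\mathcal{B}}$ is the operator norm. *)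

theory Defs
  imports "HOL-Analysis.Analysis"
begin

text \<open>Grid t_n = n/N. A discrete path is gamma_p :: nat => real^'d, meaningful on 0..N.\<close>

definition beta_p :: "nat \<Rightarrow> (nat \<Rightarrow> real^'d) \<Rightarrow> nat \<Rightarrow> real^'d" where
  "beta_p N gp n = real N *\<^sub>R (gp (Suc n) - gp n)"

definition gamma_pl :: "nat \<Rightarrow> (nat \<Rightarrow> real^'d) \<Rightarrow> real \<Rightarrow> real^'d" where
  "gamma_pl N gp t =
     (let n = min (nat \<lfloor>t * real N\<rfloor>) (N - 1);
          s = t - real n / real N
      in (1 - real N * s) *\<^sub>R gp n + (real N * s) *\<^sub>R gp (Suc n))"

definition energy :: "(real^'d \<Rightarrow> real^'d^'d) \<Rightarrow> (real \<Rightarrow> real^'d) \<Rightarrow> real" where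
  "energy H \<gamma> = integral {0..1}
     (\<lambda>t. vector_derivative \<gamma> (at t) \<bullet> (H (\<gamma> t) *v vector_derivative \<gamma> (at t)))"

definition energy_l :: "(real^'d \<Rightarrow> real^'d^'d) \<Rightarrow> nat \<Rightarrow> (nat \<Rightarrow> real^'d) \<Rightarrow> real" where
  "energy_l H N gp = (1 / real N) * (\<Sum>n<N. beta_p N gp n \<bullet> (H (gp n) *v beta_p N gp n))"

end

theory Submission
  imports Defs
begin

text \<open>On the cell \<open>[t\<^sub>k, t\<^sub>k\<^sub>+\<^sub>1]\<close> the interpolant moves with constant velocity
  \<open>\<beta>\<^sub>k\<close>, so the energy density there is \<open>\<beta>\<^sub>k \<bullet> H(\<gamma>(t)) \<beta>\<^sub>k\<close>, while the discrete energy
  freezes \<open>H\<close> at \<open>\<gamma>(t\<^sub>k)\<close>. Since \<open>|\<gamma>(t) - \<gamma>(t\<^sub>k)| = (t - t\<^sub>k) |\<beta>\<^sub>k|\<close>, the Lipschitz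
  bound on \<open>H\<close> makes the two integrands differ by at most \<open>L\<^sub>H (t - t\<^sub>k) |\<beta>\<^sub>k|\<^sup>3\<close>,
  i.e. by \<open>L\<^sub>H |\<beta>\<^sub>k|\<^sup>3 / (2 N\<^sup>2)\<close> after integration over the cell. Summing over the
  cells and using \<open>\<Sum> |\<beta>\<^sub>k|\<^sup>3 \<le> (\<Sum> |\<beta>\<^sub>k|\<^sup>2)\<^sup>3\<^sup>/\<^sup>2 = (N K\<^sub>3\<^sup>2)\<^sup>3\<^sup>/\<^sup>2\<close> gives the claim.\<close>

definition energy_density :: "(real^'d \<Rightarrow> real^'d^'d) \<Rightarrow> (real \<Rightarrow> real^'d) \<Rightarrow> real \<Rightarrow> real" where
  "energy_density H \<gamma> =
     (\<lambda>t. vector_derivative \<gamma> (at t) \<bullet> (H (\<gamma> t) *v vector_derivative \<gamma> (at t)))"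

lemma energy_eq_integral_energy_density: "energy H \<gamma> = integral {0..1} (energy_density H \<gamma>)"
  unfolding energy_def energy_density_def ..

lemma gamma_pl_on_cell:
  assumes "k < N" and "real k / real N \<le> t" and "t < real (Suc k) / real N"
  shows "gamma_pl N gp t = gp k + (real N * t - real k) *\<^sub>R (gp (Suc k) - gp k)"
proof -
  have N: "real N > 0" using assms(1) by simp
  have "\<lfloor>t * real N\<rfloor> = int k"
    using assms N by (simp add: floor_eq_iff field_simps)
  then have cell: "min (nat \<lfloor>t * real N\<rfloor>) (N - 1) = k" using assms(1) by simp
  have "real N * (t - real k / real N) = real N * t - real k" using N by (simp add: field_simps)
  then show ?thesis unfolding gamma_pl_def Let_def cell by (simp add: algebra_simps)
qed

lemma gamma_pl_vector_derivative:
  assumes "k < N" and "real k / real N < t" and "t < real (Suc k) / real N"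
  shows "vector_derivative (gamma_pl N gp) (at t) = beta_p N gp k"
proof -
  let ?line = "\<lambda>t. gp k + (real N * t - real k) *\<^sub>R (gp (Suc k) - gp k)"
  have "(?line has_vector_derivative beta_p N gp k) (at t)"
    unfolding beta_p_def by (auto intro!: derivative_eq_intros)
  then have "(gamma_pl N gp has_vector_derivative beta_p N gp k) (at t)"
    by (rule has_vector_derivative_transform_within_open
          [where S = "{real k / real N<..<real (Suc k) / real N}"])
       (use assms in \<open>auto simp: gamma_pl_on_cell\<close>)
  then show ?thesis by (rule vector_derivative_at)
qed

lemma energy_density_gamma_pl_on_cell:
  assumes "k < N" and "real k / real N < t" and "t < real (Suc k) / real N"
  shows "energy_density H (gamma_pl N gp) t =
    beta_p N gp k \<bullet> (H (gp k + (real N * t - real k) *\<^sub>R (gp (Suc k) - gp k)) *v beta_p N gp k)"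
  using assms by (simp add: energy_density_def gamma_pl_vector_derivative gamma_pl_on_cell)

lemma bounded_linear_matrix_vector_mult_left: "bounded_linear (\<lambda>A::real^'n^'m. A *v v)"
  unfolding linear_conv_bounded_linear[symmetric]
  by (rule linearI) (auto simp: vec_eq_iff matrix_vector_mult_def sum_distrib_left sum.distrib algebra_simps)

lemma continuous_on_matrix_vector_mult_left [continuous_intros]:
  fixes f :: "'a::topological_space \<Rightarrow> real^'n^'m"
  shows "continuous_on S f \<Longrightarrow> continuous_on S (\<lambda>x. f x *v v)"
  by (rule continuous_on_compose2[OF linear_continuous_on[OF bounded_linear_matrix_vector_mult_left]])
     auto

lemma quadratic_form_diff_le_onorm:
  fixes A B :: "real^'n^'n" and v :: "real^'n"
  assumes "onorm (\<lambda>u. (A - B) *v u) \<le> c"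
  shows "\<bar>v \<bullet> (A *v v) - v \<bullet> (B *v v)\<bar> \<le> c * (norm v)\<^sup>2"
proof -
  have "\<bar>v \<bullet> (A *v v) - v \<bullet> (B *v v)\<bar> = \<bar>v \<bullet> ((A - B) *v v)\<bar>"
    by (simp add: matrix_vector_mult_diff_rdistrib inner_diff_right)
  also have "\<dots> \<le> norm v * norm ((A - B) *v v)" by (rule Cauchy_Schwarz_ineq2)
  also have "\<dots> \<le> norm v * (onorm (\<lambda>u. (A - B) *v u) * norm v)"
    by (intro mult_left_mono onorm) auto
  also have "\<dots> \<le> norm v * (c * norm v)"
    by (intro mult_left_mono mult_right_mono assms) auto
  finally show ?thesis by (simp add: power2_eq_square algebra_simps)
qed

lemma onorm_lipschitz_const_nonneg:
  fixes H :: "real^'n \<Rightarrow> real^'n^'n"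
  assumes "\<And>x y. onorm (\<lambda>u. (H x - H y) *v u) \<le> L * norm (x - y)"
  shows "0 \<le> L"
proof -
  have "0 \<le> onorm (\<lambda>u. (H 0 - H 1) *v u)" by (rule onorm_pos_le) simp
  also have "\<dots> \<le> L * norm (0 - 1 :: real^'n)" by (rule assms)
  finally show ?thesis by (simp add: zero_le_mult_iff vec_eq_iff)
qed

lemma integral_deviation_le_linear:
  fixes g :: "real \<Rightarrow> real"
  assumes g: "g integrable_on {a..b}" and "a \<le> b"
    and dev: "\<And>t. t \<in> {a..b} \<Longrightarrow> \<bar>g t - c\<bar> \<le> B * (t - a)"
  shows "\<bar>integral {a..b} g - c * (b - a)\<bar> \<le> B * (b - a)\<^sup>2 / 2"
proof -
  have "((\<lambda>t. B * (t - a)\<^sup>2 / 2) has_real_derivative B * (t - a)) (at t)" for t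
    by (auto intro!: derivative_eq_intros)
  then have ramp: "((\<lambda>t. B * (t - a)) has_integral B * (b - a)\<^sup>2 / 2) {a..b}"
    using fundamental_theorem_of_calculus[OF \<open>a \<le> b\<close>, of "\<lambda>t. B * (t - a)\<^sup>2 / 2" "\<lambda>t. B * (t - a)"]
    by (simp add: has_real_derivative_iff_has_vector_derivative[symmetric] has_field_derivative_at_within)
  have "integral {a..b} g - c * (b - a) = integral {a..b} (\<lambda>t. g t - c)"
    using \<open>a \<le> b\<close> by (simp add: integral_diff[OF g integrable_const_ivl] mult.commute)
  also have "\<bar>\<dots>\<bar> \<le> integral {a..b} (\<lambda>t. B * (t - a))"
    using integral_norm_bound_integral[OF integrable_diff[OF g integrable_const_ivl]
        has_integral_integrable[OF ramp]] dev
    by simp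
  finally show ?thesis by (simp only: integral_unique[OF ramp])
qed

lemma energy_density_gamma_pl_cell_estimate:
  fixes H :: "real^'d \<Rightarrow> real^'d^'d" and gp :: "nat \<Rightarrow> real^'d"
  assumes "k < N" and H: "continuous_on UNIV H"
    and lip: "\<And>x y. onorm (\<lambda>u. (H x - H y) *v u) \<le> L_H * norm (x - y)"
  defines "cell \<equiv> {real k / real N .. real (Suc k) / real N}" and "\<beta> \<equiv> beta_p N gp k"
  shows "energy_density H (gamma_pl N gp) integrable_on cell"
    and "\<bar>integral cell (energy_density H (gamma_pl N gp)) - (1 / real N) * (\<beta> \<bullet> (H (gp k) *v \<beta>))\<bar>
           \<le> L_H * (norm \<beta>) ^ 3 / (2 * (real N)\<^sup>2)"
proof -
  define a where "a = real k / real N"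
  define d where "d = gp (Suc k) - gp k"
  define g where "g = (\<lambda>t. \<beta> \<bullet> (H (gp k + (real N * t - real k) *\<^sub>R d) *v \<beta>))"
  have N: "real N > 0" using \<open>k < N\<close> by simp
  have cell: "cell = {a .. a + 1 / real N}"
    unfolding cell_def a_def using N by (simp add: field_simps)
  have "continuous_on cell g"
    unfolding g_def by (intro continuous_intros continuous_on_compose2[OF H] subset_UNIV)
  then have g: "g integrable_on cell"
    unfolding cell by (rule integrable_continuous_interval)
  have density: "(energy_density H (gamma_pl N gp) has_integral integral cell g) cell"
  proof (rule has_integral_spike_finite[OF _ _ integrable_integral[OF g]])
    show "finite {real k / real N, real (Suc k) / real N}" by simp
    fix t assume "t \<in> cell - {real k / real N, real (Suc k) / real N}"
    then show "energy_density H (gamma_pl N gp) t = g t"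
      unfolding g_def d_def \<beta>_def cell_def
      by (intro energy_density_gamma_pl_on_cell \<open>k < N\<close>) auto
  qed
  then show "energy_density H (gamma_pl N gp) integrable_on cell" by (rule has_integral_integrable)
  have density_eq: "integral cell (energy_density H (gamma_pl N gp)) = integral cell g"
    using density by (rule integral_unique)
  have "\<bar>g t - \<beta> \<bullet> (H (gp k) *v \<beta>)\<bar> \<le> L_H * (norm \<beta>) ^ 3 * (t - a)" if "t \<in> cell" for t
  proof -
    have step: "real N * t - real k = real N * (t - a)" unfolding a_def using N by (simp add: field_simps)
    have "\<beta> = real N *\<^sub>R d" unfolding \<beta>_def d_def beta_p_def ..
    have "\<bar>g t - \<beta> \<bullet> (H (gp k) *v \<beta>)\<bar>
        \<le> L_H * norm ((gp k + (real N * t - real k) *\<^sub>R d) - gp k) * (norm \<beta>)\<^sup>2"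
      unfolding g_def by (rule quadratic_form_diff_le_onorm[OF lip])
    also have "norm ((gp k + (real N * t - real k) *\<^sub>R d) - gp k) = (t - a) * norm \<beta>"
      using \<open>\<beta> = real N *\<^sub>R d\<close> that N unfolding cell step by simp
    finally show ?thesis by (simp add: power3_eq_cube power2_eq_square mult_ac)
  qed
  from integral_deviation_le_linear[OF g[unfolded cell] _ this[unfolded cell]]
  show "\<bar>integral cell (energy_density H (gamma_pl N gp)) - (1 / real N) * (\<beta> \<bullet> (H (gp k) *v \<beta>))\<bar>
          \<le> L_H * (norm \<beta>) ^ 3 / (2 * (real N)\<^sup>2)"
    using N unfolding density_eq unfolding cell by (simp add: power2_eq_square field_simps)
qed

lemma has_integral_uniform_cells:
  fixes f :: "real \<Rightarrow> 'a::banach"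
  assumes "0 < N" and "\<And>k. k < m \<Longrightarrow> f integrable_on {real k / real N .. real (Suc k) / real N}"
  shows "(f has_integral (\<Sum>k<m. integral {real k / real N .. real (Suc k) / real N} f))
           {0 .. real m / real N}"
  using assms(2)
proof (induction m)
  case 0
  show ?case using has_integral_refl(2)[of f 0] by simp
next
  case (Suc m)
  have "(f has_integral (\<Sum>k<m. integral {real k / real N .. real (Suc k) / real N} f)
           + integral {real m / real N .. real (Suc m) / real N} f) {0 .. real (Suc m) / real N}"
    by (rule has_integral_combine[of 0 "real m / real N"])
       (use Suc \<open>0 < N\<close> in \<open>auto simp: divide_simps\<close>)
  then show ?case by simp
qed

lemma sum_power3_le_sum_power2_sqrt:
  fixes x :: "'a \<Rightarrow> real"
  shows "(\<Sum>k\<in>A. x k ^ 3) \<le> (\<Sum>k\<in>A. (x k)\<^sup>2) * sqrt (\<Sum>k\<in>A. (x k)\<^sup>2)"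
proof (cases "finite A")
  case True
  define S where "S = (\<Sum>k\<in>A. (x k)\<^sup>2)"
  have "x k ^ 3 \<le> (x k)\<^sup>2 * sqrt S" if "k \<in> A" for k
  proof -
    have "(x k)\<^sup>2 \<le> S" unfolding S_def by (rule member_le_sum) (use that True in auto)
    then have "x k \<le> sqrt S" using real_le_rsqrt by fastforce
    then show ?thesis using mult_left_mono[of "x k" "sqrt S" "(x k)\<^sup>2"]
      by (simp add: power3_eq_cube power2_eq_square mult.assoc)
  qed
  then have "(\<Sum>k\<in>A. x k ^ 3) \<le> (\<Sum>k\<in>A. (x k)\<^sup>2 * sqrt S)" by (rule sum_mono)
  then show ?thesis by (simp add: S_def sum_distrib_right)
qed simp

theorem proposition8p2:
  fixes H :: "real^'d \<Rightarrow> real^'d^'d" and L_H :: real and N :: nat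
    and gp :: "nat \<Rightarrow> real^'d"
  assumes C1: "\<exists>H'. (\<forall>x. (H has_derivative blinfun_apply (H' x)) (at x)) \<and> continuous_on UNIV H'"
    and sym: "\<And>x. transpose (H x) = H x"
    and posdef: "\<And>x u. u \<noteq> 0 \<Longrightarrow> u \<bullet> (H x *v u) > 0"
    and lip: "\<And>x y. onorm (\<lambda>u. (H x - H y) *v u) \<le> L_H * norm (x - y)"
    and N: "N \<ge> 1"
  defines "K3 \<equiv> sqrt ((1 / real N) * (\<Sum>n<N. (norm (beta_p N gp n))\<^sup>2))"
  shows "\<bar>energy H (gamma_pl N gp) - energy_l H N gp\<bar> \<le> L_H * K3 ^ 3 / (2 * sqrt (real N))"
proof -
  define \<beta> where "\<beta> = beta_p N gp"
  define S where "S = (\<Sum>k<N. (norm (\<beta> k))\<^sup>2)"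
  let ?cell = "\<lambda>k. {real k / real N .. real (Suc k) / real N}"
  let ?I = "\<lambda>k. integral (?cell k) (energy_density H (gamma_pl N gp))"
  have H: "continuous_on UNIV H"
    using C1 by (metis continuous_at_imp_continuous_on has_derivative_continuous)
  note cell_estimate = energy_density_gamma_pl_cell_estimate[OF _ H lip]
  have "(energy_density H (gamma_pl N gp) has_integral (\<Sum>k<N. ?I k)) {0..1}"
    using has_integral_uniform_cells[of N N, OF _ cell_estimate(1)] N by simp
  then have "energy H (gamma_pl N gp) = (\<Sum>k<N. ?I k)"
    by (simp add: energy_eq_integral_energy_density integral_unique)
  moreover have "energy_l H N gp = (\<Sum>k<N. (1 / real N) * (\<beta> k \<bullet> (H (gp k) *v \<beta> k)))"
    unfolding energy_l_def \<beta>_def by (simp add: sum_distrib_left)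
  ultimately have "\<bar>energy H (gamma_pl N gp) - energy_l H N gp\<bar>
      \<le> (\<Sum>k<N. \<bar>?I k - (1 / real N) * (\<beta> k \<bullet> (H (gp k) *v \<beta> k))\<bar>)"
    by (simp add: sum_subtractf[symmetric] sum_abs)
  also have "\<dots> \<le> L_H / (2 * (real N)\<^sup>2) * (\<Sum>k<N. (norm (\<beta> k)) ^ 3)"
    unfolding sum_distrib_left by (rule sum_mono) (use cell_estimate(2) in \<open>simp add: \<beta>_def\<close>)
  also have "\<dots> \<le> L_H / (2 * (real N)\<^sup>2) * (S * sqrt S)"
    unfolding S_def using onorm_lipschitz_const_nonneg[OF lip]
    by (intro mult_left_mono sum_power3_le_sum_power2_sqrt) simp
  also have "\<dots> = L_H * K3 ^ 3 / (2 * sqrt (real N))"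
    using N unfolding K3_def S_def \<beta>_def
    by (simp add: sum_nonneg real_sqrt_divide power3_eq_cube power2_eq_square field_simps)
  finally show ?thesis .
qed

end
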